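(* Let $d$ and $r$ be odd integers satisfying $d\geqslant 3$, $r\leqslant d-4$ and $\gcd(d,r)=1$. Let $n$ be an integer such that $n\geqslant (d-r)/2$ and $n\equiv -r/2\pmod{d}$ (that is, $2n\equiv -r\pmod d$). Then none of the numbers in the arithmetic progression \[ \frac{d+r}{2},\ \frac{d+r}{2}+d,\ \ldots,\ \frac{d+r}{2}+dn-2n-r-d \] (with common difference $d$) is a multiple of $n$. *)

theory Defs
  imports "HOL-Number_Theory.Cong"
begin

end

theory Submission
  imports Defs
begin

text \<open>Write \<open>2n + r = dt\<close>; then \<open>t \<ge> 1\<close>, and twice the \<open>k\<close>-th term \<open>a\<^sub>k\<close> plus \<open>2n\<close>
  equals \<open>d(1 + t + 2k)\<close>. Every common divisor of \<open>n\<close> and \<open>d\<close> divides \<open>r\<close>, so \<open>n\<close> is coprime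
  to \<open>d\<close>, and \<open>n dvd a\<^sub>k\<close> forces \<open>n dvd 1 + t + 2k\<close>. The range of \<open>k\<close> gives
  \<open>0 < 1 + t + 2k < 2n\<close>, hence \<open>1 + t + 2k = n\<close> and \<open>2a\<^sub>k = n(d - 2)\<close>. But twice a multiple
  of \<open>n\<close> is \<open>n\<close> times an even number, while \<open>d - 2\<close> is odd.\<close>

lemma coprime_of_cong_mult:
  fixes a n b d :: int
  assumes "[a * n = b] (mod d)" and "coprime d b"
  shows "coprime n d"
proof (rule coprimeI)
  fix c
  assume "c dvd n" and "c dvd d"
  moreover have "d dvd a * n - b"
    using assms(1) by (simp add: cong_iff_dvd_diff)
  ultimately have "c dvd a * n - (a * n - b)"
    by (meson dvd_diff dvd_mult dvd_trans)
  then have "c dvd b"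
    by simp
  with \<open>c dvd d\<close> show "is_unit c"
    using assms(2) coprime_common_divisor by blast
qed

lemma dvd_eq_if_less_double:
  fixes m n :: int
  assumes "n dvd m" and "0 < m" and "m < 2 * n"
  shows "m = n"
proof -
  obtain j where m: "m = n * j"
    using assms(1) by blast
  have "n > 0"
    using assms(2,3) by linarith
  moreover have "n * 0 < n * j" and "n * j < n * 2"
    using assms(2,3) m by linarith+
  ultimately have "0 < j" and "j < 2"
    by (simp_all only: mult_less_cancel_left_pos)
  then show ?thesis
    using m by simp
qed

lemma even_cofactor_of_dvd_double:
  fixes n a m :: int
  assumes "n dvd a" and "2 * a = n * m" and "n \<noteq> 0"
  shows "even m"
proof -
  obtain i where "a = n * i"
    using assms(1) by blast
  then have "n * m = n * (2 * i)"
    using assms(2) by (metis mult.left_commute)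
  then have "m = 2 * i"
    using assms(3) mult_cancel_left by blast
  then show ?thesis
    by simp
qed

lemma not_dvd_progression_term:
  fixes d r n t k :: int
  assumes "odd d" and "odd r" and "coprime n d" and t: "2 * n + r = d * t"
    and "1 \<le> t" and "0 \<le> k" and "k \<le> n - t - 1"
  shows "\<not> n dvd (d + r) div 2 + d * k"
proof
  let ?a = "(d + r) div 2 + d * k"
  assume "n dvd ?a"
  have "2 * ((d + r) div 2) = d + r"
    using assms(1,2) by simp
  then have key: "2 * ?a + 2 * n = d * (1 + t + 2 * k)"
    using t by (simp add: algebra_simps)
  have "n dvd 2 * ?a + 2 * n"
    using \<open>n dvd ?a\<close> by (rule dvd_add[OF dvd_mult dvd_triv_right])
  then have "n dvd d * (1 + t + 2 * k)"
    unfolding key .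
  with \<open>coprime n d\<close> have "n dvd 1 + t + 2 * k"
    by (simp add: coprime_dvd_mult_right_iff)
  moreover have "0 < 1 + t + 2 * k" and "1 + t + 2 * k < 2 * n"
    using assms(5-7) by linarith+
  ultimately have "1 + t + 2 * k = n"
    by (rule dvd_eq_if_less_double)
  then have "2 * ?a = n * (d - 2)"
    using key by (simp add: algebra_simps)
  with \<open>n dvd ?a\<close> have "even (d - 2)"
    by (rule even_cofactor_of_dvd_double) (use assms(5-7) in simp)
  with assms(1) show False
    by simp
qed

theorem lemma4:
  fixes d r n :: int
  assumes "odd d" and "odd r" and "d \<ge> 3" and "r \<le> d - 4" and "gcd d r = 1"
    and "n \<ge> (d - r) div 2"
    and "[2 * n = - r] (mod d)"
  shows "\<forall>k::int. 0 \<le> k \<longrightarrow>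
           (d + r) div 2 + d * k \<le> (d + r) div 2 + d * n - 2 * n - r - d \<longrightarrow>
           \<not> (n dvd ((d + r) div 2 + d * k))"
proof (intro allI impI)
  fix k :: int
  assume "0 \<le> k" and bound: "(d + r) div 2 + d * k \<le> (d + r) div 2 + d * n - 2 * n - r - d"
  have "d dvd 2 * n + r"
    using assms(7) by (simp add: cong_iff_dvd_diff)
  then obtain t where t: "2 * n + r = d * t"
    by blast
  have "2 * ((d - r) div 2) = d - r"
    using assms(1,2) by simp
  then have "d * 1 \<le> d * t" and "d * k \<le> d * (n - t - 1)"
    using t assms(6) bound by (simp_all add: algebra_simps)
  then have "1 \<le> t" and "k \<le> n - t - 1"
    using assms(3) by simp_all
  have "coprime d (- r)"
    using assms(5) by (simp add: coprime_iff_gcd_eq_1)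
  with assms(7) have "coprime n d"
    by (rule coprime_of_cong_mult)
  with assms(1,2) t \<open>1 \<le> t\<close> \<open>0 \<le> k\<close> \<open>k \<le> n - t - 1\<close>
  show "\<not> n dvd (d + r) div 2 + d * k"
    by (intro not_dvd_progression_term)
qed

end
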